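(* Let $t'$ be a feasible type report profile, let buyer $m$ be the winner under efficient allocation, and let $LCC_m=(l_1,l_2,\dots,l_q=m)$. Let $l_i\in LCC_m$ be an intermediate node. If, when $l_i$'s report changes from $r'_{l_i}$ to $r'_{l_i}\setminus {r^*_{l_i}}'$, the winner under efficient allocation becomes a buyer $m'\ne m$, then $\{l_{i+1},l_{i+2},\dots,l_q\}\cap LCC_{m'}=\emptyset$, where $LCC_{m'}$ is the lowest-cost trading chain to $m'$ under the modified profile.
   Context: Setting. A seller $s$ sells one indivisible commodity. Besides $s$, there is a set $N$ of agents, each either a buyer or an intermediate node. Each buyer $i$ reports a bid $b'_i\ge 0$. Each intermediate node $i$ has a neighbour set $r_i\subseteq N$, reports $r'_i\subseteq r_i$ (the agents to whom she passes the sale information), and has a publicly known cost $c_i$ incurred if a trade passes through her. Buyers have no links among themselves. Initially only the seller's neighbours $r_s$ know of the sale. A trading chain from $s$ to $i$ under reports $t'$ is a simple path $(a_1,\dots,a_p,i)$ with $a_1\in r_s$, $a_l\in r'_{a_{l-1}}$ for $1<l\le p$, $i\in r'_{a_p}$. A report profile is feasible if exactly the agents reachable from $s$ by trading chains (following the others' reports) participate; when an agent changes her report the others' profile adjusts to stay feasible. $LCC_i$ is a trading chain from $s$ to $i$ minimizing the total cost of the intermediate nodes on it other than $i$. For a buyer $i$, $SW_i=b'_i-\sum_{j\in LCC_i\setminus\{i\}}c_j$. The winner under efficient allocation is $m=\arg\max_i SW_i$, and the item is traded along $LCC_m$. Threshold neighbourhood. For an intermediate node $i$, ${r_i^*}'$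 is a minimum-cardinality subset $r''\subseteq r'_i$ such that, when $i$ reports $r'_i\setminus r''$ instead of $r'_i$, the winner under efficient allocation changes to a buyer other than $m$; if no such subset exists, ${r_i^*}'=r'_i$. *)

theory Defs
  imports Complex_Main
begin

text \<open>Agents have a linearly ordered type; the order is only used to break ties
  in the arg max defining the winner.  N is the set of agents (seller excluded),
  B \<subseteq> N the buyers, N - B the intermediate nodes, rs the seller's neighbours,
  rep i the reported neighbour set of intermediate node i, c the public costs,
  b the reported bids.\<close>

definition trading_chain ::
  "'a set \<Rightarrow> 'a set \<Rightarrow> 'a set \<Rightarrow> ('a \<Rightarrow> 'a set) \<Rightarrow> 'a list \<Rightarrow> 'a \<Rightarrow> bool" where
  "trading_chain N B rs rep xs i \<longleftrightarrow>
     xs \<noteq> [] \<and> last xs = i \<and> distinct xs \<and> set xs \<subseteq> N \<and> hd xs \<in> rs \<and>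
     (\<forall>k. Suc k < length xs \<longrightarrow> xs ! k \<in> N - B \<and> xs ! Suc k \<in> rep (xs ! k))"

definition chain_cost :: "('a \<Rightarrow> real) \<Rightarrow> 'a list \<Rightarrow> real" where
  "chain_cost c xs = sum_list (map c (butlast xs))"

definition reachable ::
  "'a set \<Rightarrow> 'a set \<Rightarrow> 'a set \<Rightarrow> ('a \<Rightarrow> 'a set) \<Rightarrow> 'a \<Rightarrow> bool" where
  "reachable N B rs rep i \<longleftrightarrow> (\<exists>xs. trading_chain N B rs rep xs i)"

definition is_LCC ::
  "'a set \<Rightarrow> 'a set \<Rightarrow> 'a set \<Rightarrow> ('a \<Rightarrow> 'a set) \<Rightarrow> ('a \<Rightarrow> real) \<Rightarrow> 'a list \<Rightarrow> 'a \<Rightarrow> bool" where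
  "is_LCC N B rs rep c xs i \<longleftrightarrow> trading_chain N B rs rep xs i \<and>
     (\<forall>ys. trading_chain N B rs rep ys i \<longrightarrow> chain_cost c xs \<le> chain_cost c ys)"

text \<open>SW_i = b_i minus the cost of LCC_i (meaningful for reachable i).\<close>
definition SW ::
  "'a set \<Rightarrow> 'a set \<Rightarrow> 'a set \<Rightarrow> ('a \<Rightarrow> 'a set) \<Rightarrow> ('a \<Rightarrow> real) \<Rightarrow> ('a \<Rightarrow> real) \<Rightarrow> 'a \<Rightarrow> real" where
  "SW N B rs rep c b i =
     b i - Min {chain_cost c xs | xs. trading_chain N B rs rep xs i}"

definition is_winner ::
  "'a::linorder set \<Rightarrow> 'a set \<Rightarrow> 'a set \<Rightarrow> ('a \<Rightarrow> 'a set) \<Rightarrow> ('a \<Rightarrow> real) \<Rightarrow> ('a \<Rightarrow> real) \<Rightarrow> 'a \<Rightarrow> bool" where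
  "is_winner N B rs rep c b m \<longleftrightarrow> m \<in> B \<and> reachable N B rs rep m \<and>
     (\<forall>k\<in>B. reachable N B rs rep k \<longrightarrow>
        SW N B rs rep c b k < SW N B rs rep c b m \<or>
        (SW N B rs rep c b k = SW N B rs rep c b m \<and> m \<le> k))"

definition winner_changes ::
  "'a::linorder set \<Rightarrow> 'a set \<Rightarrow> 'a set \<Rightarrow> ('a \<Rightarrow> 'a set) \<Rightarrow> ('a \<Rightarrow> real) \<Rightarrow> ('a \<Rightarrow> real)
     \<Rightarrow> 'a \<Rightarrow> 'a \<Rightarrow> 'a set \<Rightarrow> bool" where
  "winner_changes N B rs rep c b m i R \<longleftrightarrow>
     (\<exists>m'. m' \<noteq> m \<and> is_winner N B rs (rep(i := rep i - R)) c b m')"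

definition is_threshold ::
  "'a::linorder set \<Rightarrow> 'a set \<Rightarrow> 'a set \<Rightarrow> ('a \<Rightarrow> 'a set) \<Rightarrow> ('a \<Rightarrow> real) \<Rightarrow> ('a \<Rightarrow> real)
     \<Rightarrow> 'a \<Rightarrow> 'a \<Rightarrow> 'a set \<Rightarrow> bool" where
  "is_threshold N B rs rep c b m i R \<longleftrightarrow>
     (R \<subseteq> rep i \<and> winner_changes N B rs rep c b m i R \<and>
        (\<forall>R'. R' \<subseteq> rep i \<longrightarrow> winner_changes N B rs rep c b m i R' \<longrightarrow> card R \<le> card R'))
   \<or> ((\<nexists>R'. R' \<subseteq> rep i \<and> winner_changes N B rs rep c b m i R') \<and> R = rep i)"

end

theory Submission
  imports Defs
begin

text \<open>Suppose LCC_m and LCC_m' share a node z beyond l_i. Exchanging the parts of the two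
  chains after z gives a chain to m' under the original reports (the tail of LCC_m' uses only
  links that are still reported) and a chain to m under the modified reports (the tail of LCC_m
  avoids l_i, whose report is the only one that changed). Adding up the resulting lower bounds
  on the social welfare shows SW m + SW' m' \<le> SW m' + SW' m, while m winning before and m'
  winning after the change gives the reverse inequalities. Hence both comparisons are ties,
  and the tie-breaking rule would have to prefer m to m' and m' to m.\<close>

fun follows_reports :: "'a set \<Rightarrow> 'a set \<Rightarrow> ('a \<Rightarrow> 'a set) \<Rightarrow> 'a list \<Rightarrow> bool" where
  "follows_reports N B G (x # y # zs) \<longleftrightarrow> x \<in> N - B \<and> y \<in> G x \<and> follows_reports N B G (y # zs)"
| "follows_reports N B G _ \<longleftrightarrow> True"

definition report_path :: "'a set \<Rightarrow> 'a set \<Rightarrow> ('a \<Rightarrow> 'a set) \<Rightarrow> 'a list \<Rightarrow> bool" where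
  "report_path N B G xs \<longleftrightarrow> distinct xs \<and> set xs \<subseteq> N \<and> follows_reports N B G xs"

lemma follows_reports_iff_nth:
  "follows_reports N B G xs \<longleftrightarrow>
     (\<forall>k. Suc k < length xs \<longrightarrow> xs ! k \<in> N - B \<and> xs ! Suc k \<in> G (xs ! k))"
proof (induction N B G xs rule: follows_reports.induct)
  case (1 N B G x y zs)
  have "(\<forall>k. Suc k < length (x # y # zs) \<longrightarrow>
          (x # y # zs) ! k \<in> N - B \<and> (x # y # zs) ! Suc k \<in> G ((x # y # zs) ! k)) \<longleftrightarrow>
        x \<in> N - B \<and> y \<in> G x \<and>
        (\<forall>k. Suc k < length (y # zs) \<longrightarrow>
          (y # zs) ! k \<in> N - B \<and> (y # zs) ! Suc k \<in> G ((y # zs) ! k))"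
    (is "?all \<longleftrightarrow> ?first_link_and_rest")
  proof
    assume ?all
    then show ?first_link_and_rest
      by (metis Suc_less_eq length_Cons nth_Cons_0 nth_Cons_Suc zero_less_Suc)
  qed (auto simp: nth_Cons split: nat.split)
  with 1 show ?case by simp
qed auto

lemma trading_chain_iff_report_path:
  "trading_chain N B rs G xs i \<longleftrightarrow>
     xs \<noteq> [] \<and> last xs = i \<and> hd xs \<in> rs \<and> report_path N B G xs"
  unfolding trading_chain_def report_path_def follows_reports_iff_nth by blast

lemma follows_reports_append_Cons:
  "follows_reports N B G (p @ x # q) \<longleftrightarrow>
     follows_reports N B G (p @ [x]) \<and> follows_reports N B G (x # q)"
proof (induction p)
  case Nil
  then show ?case by (cases q) auto
next
  case (Cons a p)
  then show ?case by (cases p) auto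
qed

lemma follows_reports_fun_upd:
  "a \<notin> set xs \<Longrightarrow> follows_reports N B (G(a := X)) xs \<longleftrightarrow> follows_reports N B G xs"
  by (induction N B G xs rule: follows_reports.induct) auto

lemma follows_reports_mono:
  "(\<And>x. G' x \<subseteq> G x) \<Longrightarrow> follows_reports N B G' xs \<Longrightarrow> follows_reports N B G xs"
  by (induction N B G xs rule: follows_reports.induct) auto

lemma report_path_suffix:
  "report_path N B G (p @ x # q) \<Longrightarrow> report_path N B G (x # q)"
  unfolding report_path_def using follows_reports_append_Cons[of N B G p x q] by auto

lemma report_path_fun_upd:
  "a \<notin> set xs \<Longrightarrow> report_path N B (G(a := X)) xs \<longleftrightarrow> report_path N B G xs"
  unfolding report_path_def using follows_reports_fun_upd by metis

lemma report_path_mono: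
  "(\<And>x. G' x \<subseteq> G x) \<Longrightarrow> report_path N B G' xs \<Longrightarrow> report_path N B G xs"
  unfolding report_path_def using follows_reports_mono by metis

lemma chain_cost_append_Cons:
  "chain_cost c (p @ x # q) = sum_list (map c p) + chain_cost c (x # q)"
  unfolding chain_cost_def by (simp add: butlast_append)

lemma chain_cost_nonneg: "(\<And>i. 0 \<le> c i) \<Longrightarrow> 0 \<le> chain_cost c xs"
  unfolding chain_cost_def by (rule sum_list_nonneg) auto

text \<open>The spliced chain runs along p up to the first node x that also lies on z # q and
  then follows z # q from x on; stopping at the first common node keeps it simple.\<close>
lemma trading_chain_splice:
  assumes chain: "trading_chain N B rs G (p @ z # s) i"
    and path: "report_path N B G (z # q)"
    and c_nonneg: "\<And>i. 0 \<le> c i"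
  obtains zs where "trading_chain N B rs G zs (last (z # q))"
    and "chain_cost c zs \<le> sum_list (map c p) + chain_cost c (z # q)"
proof -
  have "\<exists>y\<in>set (p @ [z]). y \<in> set (z # q)" by simp
  then obtain a x a' where pz: "p @ [z] = a @ x # a'" and x: "x \<in> set (z # q)"
    and a: "\<forall>y\<in>set a. y \<notin> set (z # q)"
    using split_list_first_prop[of "p @ [z]" "\<lambda>y. y \<in> set (z # q)"] by blast
  obtain e f where zq: "z # q = e @ x # f" using x split_list by metis
  have "trading_chain N B rs G (a @ x # a' @ s) i"
    using chain pz by (metis append.assoc append_Cons append_Nil)
  then have prefix: "hd (a @ x # a' @ s) \<in> rs" "report_path N B G (a @ x # a' @ s)"
    unfolding trading_chain_iff_report_path by blast+
  have suffix: "report_path N B G (x # f)" using path zq report_path_suffix by metis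
  define zs where "zs = a @ x # f"
  have prefix_path: "follows_reports N B G (a @ [x])" "distinct a" "set a \<subseteq> N"
    using prefix(2) follows_reports_append_Cons[of N B G a x "a' @ s"]
    unfolding report_path_def by auto
  have "set a \<inter> set (x # f) = {}" using a zq by auto
  then have "report_path N B G zs"
    using prefix_path suffix follows_reports_append_Cons[of N B G a x f]
    unfolding zs_def report_path_def by auto
  moreover have "hd zs \<in> rs" using prefix(1) unfolding zs_def by (cases a) auto
  moreover have "last zs = last (z # q)" unfolding zs_def zq by simp
  ultimately have "trading_chain N B rs G zs (last (z # q))"
    unfolding trading_chain_iff_report_path zs_def by simp
  moreover have "sum_list (map c a) \<le> sum_list (map c p)"
  proof -
    have "sum_list (map c p) = chain_cost c (p @ [z])" by (simp add: chain_cost_def)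
    also have "\<dots> = sum_list (map c a) + chain_cost c (x # a')"
      unfolding pz by (rule chain_cost_append_Cons)
    finally show ?thesis using chain_cost_nonneg[of c "x # a'", OF c_nonneg] by linarith
  qed
  moreover have "chain_cost c (x # f) \<le> chain_cost c (z # q)"
    using chain_cost_append_Cons[of c e x f] sum_list_nonneg[of "map c e"] c_nonneg zq by auto
  ultimately show thesis
    using that[of zs] chain_cost_append_Cons[of c a x f] unfolding zs_def by linarith
qed

lemma finite_trading_chain_costs:
  assumes "finite N"
  shows "finite {chain_cost c xs | xs. trading_chain N B rs G xs i}"
proof -
  have "finite {xs. set xs \<subseteq> N \<and> distinct xs}" using assms by (rule finite_subset_distinct)
  then have "finite {xs. trading_chain N B rs G xs i}"
    by (rule finite_subset[rotated]) (auto simp: trading_chain_def)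
  then show ?thesis by (simp add: setcompr_eq_image)
qed

lemma SW_ge_trading_chain:
  "finite N \<Longrightarrow> trading_chain N B rs G xs i \<Longrightarrow> b i - chain_cost c xs \<le> SW N B rs G c b i"
  unfolding SW_def using finite_trading_chain_costs by (fastforce intro!: Min_le)

lemma SW_LCC:
  assumes "finite N" and "is_LCC N B rs G c xs i"
  shows "SW N B rs G c b i = b i - chain_cost c xs"
proof -
  have "Min {chain_cost c ys | ys. trading_chain N B rs G ys i} = chain_cost c xs"
    using assms finite_trading_chain_costs unfolding is_LCC_def by (intro Min_eqI) auto
  then show ?thesis unfolding SW_def by simp
qed

lemma LCC_exchange:
  assumes fin: "finite N" and c_nonneg: "\<And>i. 0 \<le> c i"
    and lcc: "is_LCC N B rs G c (p @ z # s) i"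
    and lcc': "is_LCC N B rs G' c (p' @ z # s') j"
    and tail: "report_path N B G' (z # s)"
    and tail': "report_path N B G (z # s')"
  shows "reachable N B rs G j" and "reachable N B rs G' i"
    and "SW N B rs G c b i + SW N B rs G' c b j \<le> SW N B rs G c b j + SW N B rs G' c b i"
proof -
  have chain: "trading_chain N B rs G (p @ z # s) i"
    and chain': "trading_chain N B rs G' (p' @ z # s') j"
    using lcc lcc' unfolding is_LCC_def by auto
  then have last: "last (z # s) = i" "last (z # s') = j"
    unfolding trading_chain_def by auto
  obtain xs where xs: "trading_chain N B rs G xs j"
    and xs_cost: "chain_cost c xs \<le> sum_list (map c p) + chain_cost c (z # s')"
    by (rule trading_chain_splice[OF chain tail' c_nonneg, unfolded last])
  obtain ys where ys: "trading_chain N B rs G' ys i"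
    and ys_cost: "chain_cost c ys \<le> sum_list (map c p') + chain_cost c (z # s)"
    by (rule trading_chain_splice[OF chain' tail c_nonneg, unfolded last])
  show "reachable N B rs G j" "reachable N B rs G' i"
    using xs ys unfolding reachable_def by auto
  show "SW N B rs G c b i + SW N B rs G' c b j \<le> SW N B rs G c b j + SW N B rs G' c b i"
    using SW_LCC[OF fin lcc, of b] SW_LCC[OF fin lcc', of b]
      SW_ge_trading_chain[OF fin xs, of b c] SW_ge_trading_chain[OF fin ys, of b c]
      xs_cost ys_cost chain_cost_append_Cons[of c p z s] chain_cost_append_Cons[of c p' z s']
    by linarith
qed

lemma winner_eq_of_SW_exchange:
  assumes win: "is_winner N B rs G c b m" and win': "is_winner N B rs G' c b m'"
    and reach: "reachable N B rs G m'" and reach': "reachable N B rs G' m"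
    and exchange: "SW N B rs G c b m + SW N B rs G' c b m' \<le> SW N B rs G c b m' + SW N B rs G' c b m"
  shows "m = m'"
proof -
  have "SW N B rs G c b m' < SW N B rs G c b m \<or>
        SW N B rs G c b m' = SW N B rs G c b m \<and> m \<le> m'"
    and "SW N B rs G' c b m < SW N B rs G' c b m' \<or>
        SW N B rs G' c b m = SW N B rs G' c b m' \<and> m' \<le> m"
    using win win' reach reach' unfolding is_winner_def by auto
  with exchange show ?thesis by auto
qed

theorem lemma1:
  fixes N B rs :: "'a::linorder set"
    and s :: 'a
    and r rep :: "'a \<Rightarrow> 'a set"
    and c b :: "'a \<Rightarrow> real"
    and m m' :: 'a
    and LCCm LCCm' :: "'a list"
    and k :: nat
    and Rstar :: "'a set"
  assumes finN: "finite N"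
    and s_notin: "s \<notin> N"
    and B_sub: "B \<subseteq> N"
    and rs_sub: "rs \<subseteq> N"
    and r_sub: "\<forall>i\<in>N - B. r i \<subseteq> N"
    and rep_sub: "\<forall>i\<in>N - B. rep i \<subseteq> r i"
    and c_nonneg: "\<forall>i. 0 \<le> c i"
    and b_nonneg: "\<forall>i\<in>B. 0 \<le> b i"
    and win: "is_winner N B rs rep c b m"
    and lcc: "is_LCC N B rs rep c LCCm m"
    and k_int: "Suc k < length LCCm"
    and thr: "is_threshold N B rs rep c b m (LCCm ! k) Rstar"
    and win': "is_winner N B rs (rep((LCCm ! k) := rep (LCCm ! k) - Rstar)) c b m'"
    and neq: "m' \<noteq> m"
    and lcc': "is_LCC N B rs (rep((LCCm ! k) := rep (LCCm ! k) - Rstar)) c LCCm' m'"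
  shows "set (drop (Suc k) LCCm) \<inter> set LCCm' = {}"
proof (rule ccontr)
  let ?l = "LCCm ! k"
  let ?G' = "rep(?l := rep ?l - Rstar)"
  assume "set (drop (Suc k) LCCm) \<inter> set LCCm' \<noteq> {}"
  then obtain z q s s' p' where drop: "drop (Suc k) LCCm = q @ z # s" and L': "LCCm' = p' @ z # s'"
    by (metis disjoint_iff split_list)
  define p where "p = take (Suc k) LCCm @ q"
  have L: "LCCm = p @ z # s" unfolding p_def using drop by (metis append.assoc append_take_drop_id)
  have path: "report_path N B rep LCCm" and path': "report_path N B ?G' LCCm'"
    using lcc lcc' unfolding is_LCC_def trading_chain_iff_report_path by auto
  have "?l \<in> set p" using k_int unfolding p_def by (simp add: take_Suc_conv_app_nth)
  then have "?l \<notin> set (z # s)" using path unfolding L report_path_def by auto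
  then have tail: "report_path N B ?G' (z # s)"
    using report_path_suffix[OF path[unfolded L]] report_path_fun_upd by metis
  have tail': "report_path N B rep (z # s')"
    using report_path_suffix[OF path'[unfolded L']] report_path_mono[of ?G' rep] by auto
  have "\<And>i. 0 \<le> c i" using c_nonneg by blast
  note exchange = LCC_exchange[OF finN this lcc[unfolded L] lcc'[unfolded L'] tail tail']
  have "m = m'" by (rule winner_eq_of_SW_exchange[OF win win' exchange])
  with neq show False by simp
qed

end
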